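(* Fix a constant $c\ge 10$. Consider the random pairwise load balancing process on $n\ge2$ nodes with arbitrary initial load vector $\ell(0)\in\mathbb{N}_0^n$. Let $T_2$ be the first time step $t\ge T_1$ such that $\max_{1\le i\le n}\ell_i(t)\le \varnothing+2c$ and $\min_{1\le i\le n}\ell_i(t)\ge \varnothing-2c$. Then with high probability (probability $1-O(1/n)$), $T_2 = T_1+O(n\log n)$, where the constant in $O(\cdot)$ depends only on $c$.
   Context: Random pairwise load balancing process: $n$ nodes, $m$ tokens, load vector $\ell(t)\in\mathbb{Z}^n$. In each time step $t$, independently, an ordered pair $(u,v)$ of distinct nodes is chosen uniformly at random and loads become $\ell_u(t+1)=\lceil(\ell_u(t)+\ell_v(t))/2\rceil$, $\ell_v(t+1)=\lfloor(\ell_u(t)+\ell_v(t))/2\rfloor$. Average load $\varnothing=m/n$; potential $\Phi(\ell)=\sum_i(\ell_i-\varnothing)^2$; $T_1$ is the first time $t$ with $\Phi(\ell(t))<n$. *)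

theory Defs
  imports "HOL-Probability.Probability"
begin

text \<open>Nodes are 0,...,n-1. A load vector is a function nat => nat (only the values
at indices below n matter). Ordered pairs of distinct nodes:\<close>

definition node_pairs :: "nat \<Rightarrow> (nat \<times> nat) set" where
  "node_pairs n = {(u, v). u < n \<and> v < n \<and> u \<noteq> v}"

definition pair_stream_space :: "nat \<Rightarrow> (nat \<times> nat) stream measure" where
  "pair_stream_space n = stream_space (measure_pmf (pmf_of_set (node_pairs n)))"

definition balance_step :: "nat \<times> nat \<Rightarrow> (nat \<Rightarrow> nat) \<Rightarrow> (nat \<Rightarrow> nat)" where
  "balance_step p l = (let (u, v) = p; s = l u + l v in
      (l(u := nat \<lceil>real s / 2\<rceil>))(v := nat \<lfloor>real s / 2\<rfloor>))"

primrec load :: "(nat \<Rightarrow> nat) \<Rightarrow> (nat \<times> nat) stream \<Rightarrow> nat \<Rightarrow> (nat \<Rightarrow> nat)" where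
  "load l0 \<omega> 0 = l0"
| "load l0 \<omega> (Suc t) = balance_step (\<omega> !! t) (load l0 \<omega> t)"

definition avg_load :: "nat \<Rightarrow> (nat \<Rightarrow> nat) \<Rightarrow> real" where
  "avg_load n l0 = real (\<Sum>i<n. l0 i) / real n"

definition potential :: "nat \<Rightarrow> real \<Rightarrow> (nat \<Rightarrow> nat) \<Rightarrow> real" where
  "potential n a l = (\<Sum>i<n. (real (l i) - a)\<^sup>2)"

text \<open>T1: first t with potential < n (meaningful only when such t exists).\<close>
definition T1 :: "nat \<Rightarrow> (nat \<Rightarrow> nat) \<Rightarrow> (nat \<times> nat) stream \<Rightarrow> nat" where
  "T1 n l0 \<omega> = (LEAST t. potential n (avg_load n l0) (load l0 \<omega> t) < real n)"

definition balanced_within :: "nat \<Rightarrow> real \<Rightarrow> real \<Rightarrow> (nat \<Rightarrow> nat) \<Rightarrow> bool" where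
  "balanced_within n a d l \<longleftrightarrow> (\<forall>i<n. real (l i) \<le> a + d \<and> real (l i) \<ge> a - d)"

definition T2 :: "real \<Rightarrow> nat \<Rightarrow> (nat \<Rightarrow> nat) \<Rightarrow> (nat \<times> nat) stream \<Rightarrow> nat" where
  "T2 c n l0 \<omega> = (LEAST t. T1 n l0 \<omega> \<le> t \<and>
       balanced_within n (avg_load n l0) (2 * c) (load l0 \<omega> t))"

end

theory Submission
  imports Defs
begin

text \<open>
  The proof has two phases, joined by the strong Markov property at \<open>T\<^sub>1\<close>.

  While \<open>\<Phi> \<ge> n\<close>, some two loads differ by at least two and balancing them lowers \<open>\<Phi>\<close> by at least
  one, while no step raises \<open>\<Phi>\<close> (by convexity). Hence \<open>\<Phi>/n\<close>, truncated to \<open>0\<close> below \<open>n\<close>,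
  shrinks in expectation by a fixed factor \<open>< 1\<close> per step, and by Markov's inequality \<open>\<Phi> < n\<close>
  is reached with probability at least \<open>1 - 1/n\<close>.

  Once \<open>\<Phi> < n\<close>, which persists, fewer than \<open>n/4\<close> nodes deviate from the average by more than
  \<open>c - 1\<close>. Balancing a node whose deviation exceeds \<open>c\<close> with one of the at least \<open>n/2\<close> others
  halves its excess over \<open>c\<close>, so the sum of the squared excesses \<open>(max 0 (\<plusminus>(\<ell>\<^sub>i - \<oslash>) - c))\<^sup>2\<close>
  shrinks in expectation by the factor \<open>1 - 1/(4n)\<close> per step. This sum is at most \<open>\<Phi> < n\<close> at
  \<open>T\<^sub>1\<close> and at least \<open>c\<^sup>2 \<ge> 1\<close> unless all loads lie within \<open>2c\<close> of the average, so
  \<open>8 n ln n\<close> steps later the loads are unbalanced with probability at most \<open>n \<cdot> n\<^sup>-\<^sup>2 = 1/n\<close>.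
\<close>

section \<open>The random process\<close>

lemma finite_node_pairs: "finite (node_pairs n)"
  unfolding node_pairs_def by (rule finite_subset[of _ "{..<n} \<times> {..<n}"]) auto

lemma node_pairs_nonempty:
  assumes "2 \<le> n" shows "node_pairs n \<noteq> {}"
proof -
  have "(0, 1) \<in> node_pairs n" using assms by (simp add: node_pairs_def)
  then show ?thesis by blast
qed

lemma card_node_pairs: "card (node_pairs n) = n * (n - 1)"
proof -
  have "node_pairs n = {..<n} \<times> {..<n} - (\<lambda>i. (i, i)) ` {..<n}"
    unfolding node_pairs_def by auto
  also have "card \<dots> = n * n - n"
    by (subst card_Diff_subset) (auto simp: card_image inj_on_def card_cartesian_product)
  finally show ?thesis by (simp add: diff_mult_distrib2)
qed

lemma prob_space_pair_stream_space: "prob_space (pair_stream_space n)"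
  unfolding pair_stream_space_def
  by (rule prob_space.prob_space_stream_space) (rule prob_space_measure_pmf)

lemma space_pair_stream_space [simp]: "space (pair_stream_space n) = UNIV"
  unfolding pair_stream_space_def by (simp add: space_stream_space streams_UNIV)

lemma load_Cons: "load l (p ## \<omega>) (Suc t) = load (balance_step p l) \<omega> t"
  by (induction t) auto

lemma measurable_load [measurable]:
  "(\<lambda>\<omega>. load l \<omega> t) \<in> pair_stream_space n \<rightarrow>\<^sub>M count_space UNIV"
proof (induction t)
  case (Suc t)
  have snth: "(\<lambda>\<omega>. \<omega> !! t) \<in> pair_stream_space n \<rightarrow>\<^sub>M count_space UNIV"
    using measurable_snth[of t "measure_pmf (pmf_of_set (node_pairs n))"]
    unfolding pair_stream_space_def by (simp add: measurable_cong_sets)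
  have "(\<lambda>\<omega>. balance_step (\<omega> !! t) (load l \<omega> t)) \<in> pair_stream_space n \<rightarrow>\<^sub>M count_space UNIV"
    by (rule measurable_compose_countable'[where f="\<lambda>p \<omega>. balance_step p (load l \<omega> t)", OF _ snth])
      (rule measurable_compose[OF Suc], simp_all)
  then show ?case by simp
qed simp

lemma measurable_load_borel [measurable]:
  "(\<lambda>\<omega>. g (load l \<omega> t)) \<in> borel_measurable (pair_stream_space n)"
  by (rule measurable_compose[OF measurable_load]) simp

lemma measurable_load_pred [measurable]:
  "Measurable.pred (pair_stream_space n) (\<lambda>\<omega>. Q (load l \<omega> t))"
  by (rule measurable_compose[OF measurable_load]) simp

lemma sets_pair_stream_space_Collect:
  assumes [measurable]: "Measurable.pred (pair_stream_space n) P"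
  shows "{\<omega>. P \<omega>} \<in> sets (pair_stream_space n)"
proof -
  have "{\<omega> \<in> space (pair_stream_space n). P \<omega>} \<in> sets (pair_stream_space n)" by measurable
  then show ?thesis by simp
qed

lemma nn_integral_pair_stream_space:
  assumes "2 \<le> n" and [measurable]: "f \<in> borel_measurable (pair_stream_space n)"
  shows "(\<integral>\<^sup>+\<omega>. f \<omega> \<partial>pair_stream_space n)
    = (\<Sum>p\<in>node_pairs n. \<integral>\<^sup>+\<omega>. f (p ## \<omega>) \<partial>pair_stream_space n) / card (node_pairs n)"
  using assms(2) unfolding pair_stream_space_def
  by (subst prob_space.nn_integral_stream_space[OF prob_space_measure_pmf])
    (simp_all add: nn_integral_pmf_of_set[OF node_pairs_nonempty[OF assms(1)] finite_node_pairs])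

lemma emeasure_pair_stream_space:
  assumes "2 \<le> n" and "X \<in> sets (pair_stream_space n)"
  shows "emeasure (pair_stream_space n) X
    = (\<Sum>p\<in>node_pairs n. emeasure (pair_stream_space n) {\<omega>. p ## \<omega> \<in> X}) / card (node_pairs n)"
  using assms(2) unfolding pair_stream_space_def
  by (subst prob_space.emeasure_stream_space[OF prob_space_measure_pmf])
    (simp_all add: nn_integral_pmf_of_set[OF node_pairs_nonempty[OF assms(1)] finite_node_pairs]
      space_stream_space streams_UNIV)

lemma nn_integral_load_le_geometric:
  fixes F :: "(nat \<Rightarrow> nat) \<Rightarrow> real" and \<rho> :: real
  assumes n: "2 \<le> n"
    and closed: "\<And>l p. l \<in> I \<Longrightarrow> p \<in> node_pairs n \<Longrightarrow> balance_step p l \<in> I"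
    and step: "\<And>l. l \<in> I \<Longrightarrow> (\<Sum>p\<in>node_pairs n. F (balance_step p l)) \<le> real (card (node_pairs n)) * \<rho> * F l"
    and F_nonneg: "\<And>l. 0 \<le> F l" and \<rho>: "0 \<le> \<rho>"
    and "l \<in> I"
  shows "(\<integral>\<^sup>+\<omega>. F (load l \<omega> k) \<partial>pair_stream_space n) \<le> ennreal (\<rho> ^ k * F l)"
  using \<open>l \<in> I\<close>
proof (induction k arbitrary: l)
  case 0
  interpret prob_space "pair_stream_space n" by (rule prob_space_pair_stream_space)
  show ?case using emeasure_space_1 by simp
next
  case (Suc k)
  define N where "N = card (node_pairs n)"
  have N: "0 < N"
    unfolding N_def using node_pairs_nonempty[OF n] finite_node_pairs by (simp add: card_gt_0_iff)
  have "(\<integral>\<^sup>+\<omega>. F (load l \<omega> (Suc k)) \<partial>pair_stream_space n)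
      = (\<Sum>p\<in>node_pairs n. \<integral>\<^sup>+\<omega>. F (load (balance_step p l) \<omega> k) \<partial>pair_stream_space n) / N"
    unfolding N_def by (subst nn_integral_pair_stream_space[OF n], measurable) (simp only: load_Cons)
  also have "\<dots> \<le> (\<Sum>p\<in>node_pairs n. ennreal (\<rho> ^ k * F (balance_step p l))) / N"
    by (intro divide_right_mono_ennreal sum_mono Suc.IH closed Suc.prems)
  also have "\<dots> = ennreal (\<rho> ^ k * (\<Sum>p\<in>node_pairs n. F (balance_step p l)) / N)"
    using F_nonneg \<rho> N
    by (simp add: sum_ennreal sum_nonneg sum_distrib_left divide_ennreal ennreal_of_nat_eq_real_of_nat)
  also have "\<dots> \<le> ennreal (\<rho> ^ Suc k * F l)"
  proof (rule ennreal_leI)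
    have "\<rho> ^ k * (\<Sum>p\<in>node_pairs n. F (balance_step p l)) \<le> \<rho> ^ k * (N * \<rho> * F l)"
      using step[OF Suc.prems] \<rho> unfolding N_def by (intro mult_left_mono) auto
    then show "\<rho> ^ k * (\<Sum>p\<in>node_pairs n. F (balance_step p l)) / N \<le> \<rho> ^ Suc k * F l"
      using N by (simp add: divide_le_eq algebra_simps)
  qed
  finally show ?case .
qed

lemma emeasure_load_violates_le:
  fixes F :: "(nat \<Rightarrow> nat) \<Rightarrow> real" and \<rho> :: real
  assumes n: "2 \<le> n"
    and closed: "\<And>l p. l \<in> I \<Longrightarrow> p \<in> node_pairs n \<Longrightarrow> balance_step p l \<in> I"
    and step: "\<And>l. l \<in> I \<Longrightarrow> (\<Sum>p\<in>node_pairs n. F (balance_step p l)) \<le> real (card (node_pairs n)) * \<rho> * F l"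
    and F_nonneg: "\<And>l. 0 \<le> F l" and \<rho>: "0 \<le> \<rho>"
    and F_ge_1: "\<And>l. \<not> P l \<Longrightarrow> 1 \<le> F l"
    and "l \<in> I"
  shows "emeasure (pair_stream_space n) {\<omega>. \<not> P (load l \<omega> k)} \<le> ennreal (\<rho> ^ k * F l)"
proof -
  have "emeasure (pair_stream_space n) {\<omega>. \<not> P (load l \<omega> k)}
      = (\<integral>\<^sup>+\<omega>. indicator {\<omega>. \<not> P (load l \<omega> k)} \<omega> \<partial>pair_stream_space n)"
    by (intro nn_integral_indicator[symmetric] sets_pair_stream_space_Collect) measurable
  also have "\<dots> \<le> (\<integral>\<^sup>+\<omega>. F (load l \<omega> k) \<partial>pair_stream_space n)"
    by (intro nn_integral_mono) (simp add: indicator_def F_ge_1)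
  also have "\<dots> \<le> ennreal (\<rho> ^ k * F l)"
    by (rule nn_integral_load_le_geometric[OF n closed step F_nonneg \<rho> \<open>l \<in> I\<close>])
  finally show ?thesis .
qed

definition hits_first :: "((nat \<Rightarrow> nat) \<Rightarrow> bool) \<Rightarrow> (nat \<Rightarrow> nat) \<Rightarrow> (nat \<times> nat) stream \<Rightarrow> nat \<Rightarrow> bool"
  where "hits_first Q l \<omega> s \<longleftrightarrow> Q (load l \<omega> s) \<and> (\<forall>r<s. \<not> Q (load l \<omega> r))"

lemma measurable_hits_first [measurable]:
  "Measurable.pred (pair_stream_space n) (\<lambda>\<omega>. hits_first Q l \<omega> s)"
  unfolding hits_first_def by measurable

lemma hits_first_0 [simp]: "hits_first Q l \<omega> 0 \<longleftrightarrow> Q l"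
  by (simp add: hits_first_def)

lemma hits_first_Cons:
  "hits_first Q l (p ## \<omega>) (Suc s) \<longleftrightarrow> \<not> Q l \<and> hits_first Q (balance_step p l) \<omega> s"
  by (auto simp: hits_first_def load_Cons less_Suc_eq_0_disj simp del: load.simps(2))

lemma hits_first_unique: "hits_first Q l \<omega> s \<Longrightarrow> hits_first Q l \<omega> s' \<Longrightarrow> s = s'"
  unfolding hits_first_def by (metis linorder_neqE_nat)

text \<open>A strong Markov property at the first time the process enters \<open>Q\<close>.\<close>

lemma emeasure_hits_first_then_le:
  assumes n: "2 \<le> n"
    and bound: "\<And>l. Q l \<Longrightarrow> emeasure (pair_stream_space n) {\<omega>. B (load l \<omega> k)} \<le> \<epsilon>"
  shows "emeasure (pair_stream_space n) {\<omega>. hits_first Q l \<omega> s \<and> B (load l \<omega> (s + k))}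
    \<le> \<epsilon> * emeasure (pair_stream_space n) {\<omega>. hits_first Q l \<omega> s}"
proof (induction s arbitrary: l)
  case 0
  interpret prob_space "pair_stream_space n" by (rule prob_space_pair_stream_space)
  show ?case using bound[of l] emeasure_space_1 by simp
next
  case (Suc s)
  show ?case
  proof (cases "Q l")
    case True
    then have "\<not> hits_first Q l \<omega> (Suc s)" for \<omega>
      by (auto simp: hits_first_def)
    then show ?thesis by simp
  next
    case False
    define N where "N = card (node_pairs n)"
    let ?S = "pair_stream_space n"
    have "emeasure ?S {\<omega>. hits_first Q l \<omega> (Suc s) \<and> B (load l \<omega> (Suc s + k))}
        = (\<Sum>p\<in>node_pairs n. emeasure ?S {\<omega>. hits_first Q (balance_step p l) \<omega> s \<and>
             B (load (balance_step p l) \<omega> (s + k))}) / N"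
      unfolding N_def using False
      by (subst emeasure_pair_stream_space[OF n], intro sets_pair_stream_space_Collect, measurable)
        (simp add: hits_first_Cons load_Cons del: load.simps(2))
    also have "\<dots> \<le> (\<Sum>p\<in>node_pairs n. \<epsilon> * emeasure ?S {\<omega>. hits_first Q (balance_step p l) \<omega> s}) / N"
      by (intro divide_right_mono_ennreal sum_mono Suc.IH)
    also have "\<dots> = \<epsilon> * ((\<Sum>p\<in>node_pairs n. emeasure ?S {\<omega>. hits_first Q (balance_step p l) \<omega> s}) / N)"
      by (simp add: sum_distrib_left ennreal_times_divide)
    also have "\<dots> = \<epsilon> * emeasure ?S {\<omega>. hits_first Q l \<omega> (Suc s)}"
      unfolding N_def using False
      by (subst emeasure_pair_stream_space[OF n], intro sets_pair_stream_space_Collect, measurable)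
        (simp add: hits_first_Cons)
    finally show ?thesis .
  qed
qed

lemma emeasure_after_first_hit_le:
  assumes n: "2 \<le> n"
    and bound: "\<And>l. Q l \<Longrightarrow> emeasure (pair_stream_space n) {\<omega>. B (load l \<omega> k)} \<le> \<epsilon>"
  shows "emeasure (pair_stream_space n) {\<omega>. \<exists>s. hits_first Q l \<omega> s \<and> B (load l \<omega> (s + k))} \<le> \<epsilon>"
proof -
  let ?S = "pair_stream_space n"
  interpret prob_space ?S by (rule prob_space_pair_stream_space)
  let ?A = "\<lambda>s. {\<omega>. hits_first Q l \<omega> s}"
  have sets [measurable]: "?A s \<in> sets ?S" "{\<omega>. hits_first Q l \<omega> s \<and> B (load l \<omega> (s + k))} \<in> sets ?S" for s
    by (intro sets_pair_stream_space_Collect, measurable)+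
  have "emeasure ?S {\<omega>. \<exists>s. hits_first Q l \<omega> s \<and> B (load l \<omega> (s + k))}
      \<le> (\<Sum>s. emeasure ?S {\<omega>. hits_first Q l \<omega> s \<and> B (load l \<omega> (s + k))})"
    unfolding Collect_ex_eq by (rule emeasure_subadditive_countably) (use sets in auto)
  also have "\<dots> \<le> (\<Sum>s. \<epsilon> * emeasure ?S (?A s))"
    by (intro suminf_le emeasure_hits_first_then_le[OF n] bound) auto
  also have "\<dots> = \<epsilon> * emeasure ?S (\<Union>s. ?A s)"
    using hits_first_unique
    by (subst suminf_emeasure[symmetric]) (auto simp: disjoint_family_on_def ennreal_suminf_cmult)
  also have "\<dots> \<le> \<epsilon>"
    using emeasure_le_1 mult_left_mono[of _ 1 \<epsilon>] by fastforce
  finally show ?thesis .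
qed

section \<open>A single balancing step\<close>

lemma balance_step_Pair:
  "balance_step (u, v) l = (l(u := (l u + l v + 1) div 2))(v := (l u + l v) div 2)"
proof -
  have floor: "nat \<lfloor>real s / 2\<rfloor> = s div 2" for s :: nat
    using floor_divide_of_nat_eq[of s 2, where 'a=real] by simp
  have "nat \<lceil>real s / 2\<rceil> = (s + 1) div 2" for s :: nat
    using ceiling_divide_eq_div[of "int s" 2, where 'a=real] by simp
  with floor show ?thesis
    by (simp add: balance_step_def Let_def)
qed

lemma real_halves:
  "real ((s + 1) div 2) + real (s div 2) = real s"
  "real (s div 2) \<le> real ((s + 1) div 2)"
  "real ((s + 1) div 2) \<le> real (s div 2) + 1"
  "\<bar>real ((s + 1) div 2) - real s / 2\<bar> \<le> 1 / 2"
  "\<bar>real (s div 2) - real s / 2\<bar> \<le> 1 / 2"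
proof -
  have "(s + 1) div 2 + s div 2 = s" "s div 2 \<le> (s + 1) div 2" "(s + 1) div 2 \<le> s div 2 + 1"
    by presburger+
  then show "real ((s + 1) div 2) + real (s div 2) = real s"
    "real (s div 2) \<le> real ((s + 1) div 2)" "real ((s + 1) div 2) \<le> real (s div 2) + 1"
    by (metis of_nat_add, simp, metis of_nat_1 of_nat_add of_nat_le_iff)
  then show "\<bar>real ((s + 1) div 2) - real s / 2\<bar> \<le> 1 / 2" "\<bar>real (s div 2) - real s / 2\<bar> \<le> 1 / 2"
    by (auto simp: abs_le_iff simp del: of_nat_Suc)
qed

definition balance_gain :: "(nat \<Rightarrow> real) \<Rightarrow> nat \<Rightarrow> nat \<Rightarrow> real" where
  "balance_gain f x y = f x + f y - f ((x + y + 1) div 2) - f ((x + y) div 2)"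

lemma sum_balance_step:
  assumes "(u, v) \<in> node_pairs n"
  shows "(\<Sum>i<n. f (balance_step (u, v) l i)) = (\<Sum>i<n. f (l i)) - balance_gain f (l u) (l v)"
proof -
  have uv: "u < n" "v < n" "u \<noteq> v" using assms by (auto simp: node_pairs_def)
  have "f (balance_step (u, v) l i) = f (l i)
      + (if i = u then f ((l u + l v + 1) div 2) - f (l u) else 0)
      + (if i = v then f ((l u + l v) div 2) - f (l v) else 0)" for i
    using uv by (auto simp: balance_step_Pair)
  then show ?thesis
    using uv by (simp add: sum.distrib balance_gain_def)
qed

lemma avg_load_balance_step:
  assumes "p \<in> node_pairs n"
  shows "avg_load n (balance_step p l) = avg_load n l"
proof -
  obtain u v where p: "p = (u, v)" by (cases p)
  have "balance_gain real (l u) (l v) = 0"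
    unfolding balance_gain_def using real_halves(1)[of "l u + l v"] by simp
  then have "(\<Sum>i<n. real (balance_step p l i)) = (\<Sum>i<n. real (l i))"
    using sum_balance_step[of u v n real l] assms p by simp
  then show ?thesis by (simp add: avg_load_def)
qed

lemma convex_on_two_point_le:
  fixes f :: "real \<Rightarrow> real"
  assumes f: "convex_on UNIV f" and "q \<le> y" "y \<le> p" "x + y = p + q"
  shows "f x + f y \<le> f p + f q"
proof (cases "p = q")
  case False
  define t where "t = (p - y) / (p - q)"
  have "q < p" using assms False by simp
  then have "0 \<le> t" "t \<le> 1" "t * (p - q) = p - y"
    using assms by (auto simp: t_def field_simps)
  then have t: "0 \<le> t" "t \<le> 1" "x = (1 - t) * q + t * p" "y = (1 - t) * p + t * q"
    using assms by (auto simp: algebra_simps)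
  have "f x \<le> (1 - t) * f q + t * f p" "f y \<le> (1 - t) * f p + t * f q"
    using convex_onD[OF f, of t q p] convex_onD[OF f, of t p q] t by simp_all
  then show ?thesis by (simp add: algebra_simps)
qed (use assms in simp)

lemma balance_gain_convex_nonneg:
  assumes "convex_on UNIV f"
  shows "0 \<le> balance_gain (\<lambda>x. f (real x - a)) p q"
proof -
  have "f (real ((p + q + 1) div 2) - a) + f (real ((p + q) div 2) - a) \<le> f (real p - a) + f (real q - a)"
    if "q \<le> p" for p q
  proof (rule convex_on_two_point_le[OF assms])
    show "real q - a \<le> real ((p + q) div 2) - a" "real ((p + q) div 2) - a \<le> real p - a"
      using that by simp_all
    show "real ((p + q + 1) div 2) - a + (real ((p + q) div 2) - a) = real p - a + (real q - a)"
      using real_halves(1)[of "p + q"] by simp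
  qed
  from this[of q p] this[of p q] show ?thesis
    unfolding balance_gain_def by (cases "q \<le> p") (simp_all add: add.commute)
qed

lemma sum_balance_step_convex_le:
  assumes "convex_on UNIV f" and "p \<in> node_pairs n"
  shows "(\<Sum>i<n. f (real (balance_step p l i) - a)) \<le> (\<Sum>i<n. f (real (l i) - a))"
  using assms(2) sum_balance_step[of _ _ n "\<lambda>x. f (real x - a)"] balance_gain_convex_nonneg[OF assms(1)]
  by (cases p) fastforce

lemma potential_balance_step_le:
  "p \<in> node_pairs n \<Longrightarrow> potential n a (balance_step p l) \<le> potential n a l"
  unfolding potential_def by (rule sum_balance_step_convex_le[OF convex_power2])

lemma balance_gain_square_ge:
  assumes "q + 2 \<le> p"
  shows "1 \<le> balance_gain (\<lambda>x. (real x - a)\<^sup>2) p q"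
proof -
  define x y where "x = real ((p + q + 1) div 2)" and "y = real ((p + q) div 2)"
  have sum: "x + y = real p + real q" and "y \<le> x" "x \<le> y + 1"
    unfolding x_def y_def using real_halves[of "p + q"] by simp_all
  then have "(x - y)\<^sup>2 \<le> 1"
    by (simp add: power_le_one)
  moreover have "4 \<le> (real p - real q)\<^sup>2"
    using assms power_mono[of 2 "real p - real q" 2] by simp
  \<comment> \<open>for a fixed sum of two numbers, their sum of squares is determined by their difference\<close>
  moreover have "2 * ((real p - a)\<^sup>2 + (real q - a)\<^sup>2 - (x - a)\<^sup>2 - (y - a)\<^sup>2)
      = (real p - real q)\<^sup>2 - (x - y)\<^sup>2"
  proof -
    have "2 * ((u - a)\<^sup>2 + (w - a)\<^sup>2) = (u + w - 2 * a)\<^sup>2 + (u - w)\<^sup>2" for u w :: real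
      by (simp add: power2_eq_square algebra_simps)
    from this[of "real p" "real q"] this[of x y] show ?thesis using sum by simp
  qed
  ultimately show ?thesis
    unfolding balance_gain_def x_def y_def by simp
qed

lemma potential_balance_step_decrease:
  assumes "(u, v) \<in> node_pairs n" and "l v + 2 \<le> l u"
  shows "potential n a (balance_step (u, v) l) + 1 \<le> potential n a l"
  using sum_balance_step[OF assms(1), of "\<lambda>x. (real x - a)\<^sup>2"] balance_gain_square_ge[OF assms(2)]
  unfolding potential_def by simp

section \<open>Reaching low potential\<close>

lemma load_gap_of_potential_ge:
  assumes "0 < n" and "real n \<le> potential n (avg_load n l) l"
  shows "\<exists>u<n. \<exists>v<n. l v + 2 \<le> l u"
proof (rule ccontr)
  assume "\<not> ?thesis"
  then have close: "l u \<le> l v + 1" if "u < n" "v < n" for u v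
    using that by force
  define k where "k = Min (l ` {..<n})"
  have "k \<in> l ` {..<n}"
    unfolding k_def using assms(1) by (intro Min_in) auto
  then obtain j where j: "j < n" "l j = k" by auto
  have "k \<le> l i" if "i < n" for i
    unfolding k_def using that by simp
  then have y01: "real (l i) - real k \<in> {0, 1}" if "i < n" for i
    using close[OF that j(1)] j(2) that by fastforce
  define b where "b = avg_load n l - real k"
  have sum_y: "(\<Sum>i<n. real (l i) - real k) = real n * b"
    using assms(1) by (simp add: b_def avg_load_def sum_subtractf field_simps)
  have "(real (l i) - avg_load n l)\<^sup>2 = (1 - 2 * b) * (real (l i) - real k) + b\<^sup>2" if "i < n" for i
    using y01[OF that] by (auto simp: b_def power2_eq_square algebra_simps)
  then have "potential n (avg_load n l) l = (\<Sum>i<n. (1 - 2 * b) * (real (l i) - real k) + b\<^sup>2)"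
    unfolding potential_def by simp
  also have "\<dots> = (1 - 2 * b) * (\<Sum>i<n. real (l i) - real k) + real n * b\<^sup>2"
    by (simp add: sum.distrib sum_distrib_left)
  also have "\<dots> = real n * (b - b\<^sup>2)"
    unfolding sum_y by (simp add: power2_eq_square algebra_simps)
  also have "\<dots> \<le> real n / 4"
  proof -
    have "b - b\<^sup>2 \<le> 1 / 4"
      using zero_le_power2[of "b - 1 / 2"] by (simp add: power2_eq_square algebra_simps)
    then show ?thesis
      using mult_left_mono[of "b - b\<^sup>2" "1 / 4" "real n"] by simp
  qed
  finally show False
    using assms by simp
qed

lemma sum_potential_balance_step_le:
  assumes "0 < n" and high: "real n \<le> potential n (avg_load n l) l"
  shows "(\<Sum>p\<in>node_pairs n. potential n (avg_load n l) (balance_step p l)) + 1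
    \<le> real (card (node_pairs n)) * potential n (avg_load n l) l"
proof -
  let ?\<Phi> = "potential n (avg_load n l)"
  obtain u v where "u < n" "v < n" and gap: "l v + 2 \<le> l u"
    using load_gap_of_potential_ge[OF assms] by blast
  then have uv: "(u, v) \<in> node_pairs n" by (auto simp: node_pairs_def)
  have "(\<Sum>p\<in>node_pairs n. ?\<Phi> (balance_step p l))
      = ?\<Phi> (balance_step (u, v) l) + (\<Sum>p\<in>node_pairs n - {(u, v)}. ?\<Phi> (balance_step p l))"
    using uv finite_node_pairs by (simp add: sum.remove)
  also have "\<dots> \<le> (?\<Phi> l - 1) + (\<Sum>p\<in>node_pairs n - {(u, v)}. ?\<Phi> l)"
  proof (intro add_mono sum_mono)
    show "?\<Phi> (balance_step (u, v) l) \<le> ?\<Phi> l - 1"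
      using potential_balance_step_decrease[OF uv gap, of "avg_load n l"] by simp
    show "?\<Phi> (balance_step p l) \<le> ?\<Phi> l" if "p \<in> node_pairs n - {(u, v)}" for p
      using that potential_balance_step_le by blast
  qed
  also have "\<dots> = real (card (node_pairs n)) * ?\<Phi> l - 1"
  proof -
    have "0 < card (node_pairs n)"
      using uv finite_node_pairs by (auto simp: card_gt_0_iff)
    then show ?thesis
      using uv finite_node_pairs by (simp add: card_Diff_singleton of_nat_diff algebra_simps)
  qed
  finally show ?thesis by simp
qed

definition truncated_potential :: "nat \<Rightarrow> real \<Rightarrow> (nat \<Rightarrow> nat) \<Rightarrow> real" where
  "truncated_potential n a l = (if potential n a l < real n then 0 else potential n a l / real n)"

lemma truncated_potential_nonneg: "0 \<le> truncated_potential n a l"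
  by (simp add: truncated_potential_def potential_def sum_nonneg)

lemma sum_truncated_potential_balance_step_le:
  assumes "0 < n" and "avg_load n l = a" and "potential n a l \<le> M"
  shows "(\<Sum>p\<in>node_pairs n. truncated_potential n a (balance_step p l))
    \<le> (real (card (node_pairs n)) - 1 / M) * truncated_potential n a l"
proof (cases "potential n a l < real n")
  case True
  have "truncated_potential n a (balance_step p l) = 0" if "p \<in> node_pairs n" for p
    using potential_balance_step_le[OF that, of a l] True by (simp add: truncated_potential_def)
  then show ?thesis
    using True by (simp add: truncated_potential_def)
next
  case False
  let ?N = "real (card (node_pairs n))" and ?\<Phi> = "potential n a"
  have M: "0 < M" using assms(1,3) False by simp
  have "(\<Sum>p\<in>node_pairs n. truncated_potential n a (balance_step p l))
      \<le> (\<Sum>p\<in>node_pairs n. ?\<Phi> (balance_step p l) / real n)"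
    by (intro sum_mono) (simp add: truncated_potential_def potential_def sum_nonneg)
  also have "\<dots> \<le> (?N * ?\<Phi> l - 1) / real n"
    using sum_potential_balance_step_le[of n l] assms(1,2) False
    by (simp add: divide_right_mono flip: sum_divide_distrib)
  also have "\<dots> \<le> (?N * ?\<Phi> l - ?\<Phi> l / M) / real n"
    using assms(3) M by (intro divide_right_mono) simp_all
  also have "\<dots> = (?N - 1 / M) * truncated_potential n a l"
    using False by (simp add: truncated_potential_def diff_divide_distrib algebra_simps)
  finally show ?thesis .
qed

lemma emeasure_potential_not_below_le:
  assumes n: "2 \<le> n"
  shows "\<exists>t. emeasure (pair_stream_space n) {\<omega>. \<not> potential n (avg_load n l0) (load l0 \<omega> t) < real n}
    \<le> ennreal (1 / real n)"
proof -
  define a where "a = avg_load n l0"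
  define N where "N = real (card (node_pairs n))"
  define M where "M = max (potential n a l0) (real n)"
  define \<rho> where "\<rho> = 1 - 1 / (N * M)"
  define I where "I = {l. avg_load n l = a \<and> potential n a l \<le> M}"
  have "2 \<le> N"
    using n mult_mono[of 2 "real n" 1 "real n - 1"] by (simp add: N_def card_node_pairs of_nat_diff)
  moreover have M: "2 \<le> M" using n by (simp add: M_def)
  ultimately have "4 \<le> N * M" using mult_mono[of 2 N 2 M] by simp
  then have \<rho>: "0 \<le> \<rho>" "\<rho> < 1" by (simp_all add: \<rho>_def)
  have closed: "balance_step p l \<in> I" if "l \<in> I" "p \<in> node_pairs n" for l p
    using that potential_balance_step_le[OF that(2), of a l] avg_load_balance_step[OF that(2), of l]
    unfolding I_def by auto
  have step: "(\<Sum>p\<in>node_pairs n. truncated_potential n a (balance_step p l))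
      \<le> N * \<rho> * truncated_potential n a l" if "l \<in> I" for l
  proof -
    have "N * \<rho> = N - 1 / M"
      using M \<open>2 \<le> N\<close> by (simp add: \<rho>_def field_simps)
    then show ?thesis
      using that n sum_truncated_potential_balance_step_le[of n l a M] by (simp add: I_def N_def)
  qed
  have "potential n a l0 / real n \<le> M / real n"
    by (simp add: M_def divide_right_mono)
  moreover have "0 \<le> M" using M by simp
  ultimately have "truncated_potential n a l0 \<le> M / real n"
    by (simp add: truncated_potential_def)
  moreover obtain t where "\<rho> ^ t < 1 / M"
    using real_arch_pow_inv[of "1 / M" \<rho>] \<rho> M by auto
  ultimately have "\<rho> ^ t * truncated_potential n a l0 \<le> 1 / M * (M / real n)"
    using truncated_potential_nonneg \<rho> M by (intro mult_mono) auto
  then have "\<rho> ^ t * truncated_potential n a l0 \<le> 1 / real n"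
    using M by simp
  moreover have "emeasure (pair_stream_space n) {\<omega>. \<not> potential n a (load l0 \<omega> t) < real n}
      \<le> ennreal (\<rho> ^ t * truncated_potential n a l0)"
    using n step closed truncated_potential_nonneg \<rho>(1)
    by (intro emeasure_load_violates_le[where I=I])
      (auto simp: truncated_potential_def N_def I_def a_def M_def)
  ultimately show ?thesis
    unfolding a_def by (meson ennreal_leI order_trans)
qed

section \<open>Squared excesses after reaching low potential\<close>

definition sq_excess :: "real \<Rightarrow> real \<Rightarrow> real" where
  "sq_excess c x = (max 0 (x - c))\<^sup>2"

lemma sq_excess_nonneg: "0 \<le> sq_excess c x"
  by (simp add: sq_excess_def)

lemma sq_excess_add_neg_eq:
  assumes "0 \<le> c" and "c < \<bar>x\<bar>"
  shows "sq_excess c x + sq_excess c (- x) = (\<bar>x\<bar> - c)\<^sup>2"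
  using assms by (auto simp: sq_excess_def abs_if)

lemma sq_excess_add_neg_le_square:
  assumes "0 \<le> c"
  shows "sq_excess c x + sq_excess c (- x) \<le> x\<^sup>2"
proof (cases "c < \<bar>x\<bar>")
  case True
  have "(\<bar>x\<bar> - c)\<^sup>2 \<le> \<bar>x\<bar>\<^sup>2"
    using True assms by (intro power_mono) auto
  with sq_excess_add_neg_eq[OF assms True] show ?thesis by simp
qed (auto simp: sq_excess_def)

lemma sq_excess_le_quarter:
  assumes "c < x" and "y - c \<le> (x - c) / 2"
  shows "sq_excess c y \<le> sq_excess c x / 4"
proof -
  have "(max 0 (y - c))\<^sup>2 \<le> ((x - c) / 2)\<^sup>2"
    using assms by (intro power_mono) (auto simp: max_def)
  then show ?thesis
    using assms(1) by (simp add: sq_excess_def power_divide)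
qed

lemma convex_sq_excess_scaled: "convex_on UNIV (\<lambda>x. sq_excess c (s * x))"
proof (rule convex_onI)
  fix t x y :: real
  assume t: "0 < t" "t < 1"
  define X Y where "X = max 0 (s * x - c)" and "Y = max 0 (s * y - c)"
  have "s * ((1 - t) * x + t * y) - c = (1 - t) * (s * x - c) + t * (s * y - c)"
    by (simp add: algebra_simps)
  also have "\<dots> \<le> (1 - t) * X + t * Y"
    unfolding X_def Y_def using t by (intro add_mono mult_left_mono) auto
  finally have "max 0 (s * ((1 - t) * x + t * y) - c) \<le> (1 - t) * X + t * Y"
    using t by (simp add: X_def Y_def)
  then have "(max 0 (s * ((1 - t) * x + t * y) - c))\<^sup>2 \<le> ((1 - t) * X + t * Y)\<^sup>2"
    by (rule power_mono) simp
  also have "\<dots> \<le> (1 - t) * X\<^sup>2 + t * Y\<^sup>2"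
    using convex_onD[OF convex_power2, of t X Y] t by simp
  finally show "sq_excess c (s * ((1 - t) *\<^sub>R x + t *\<^sub>R y)) \<le> (1 - t) * sq_excess c (s * x) + t * sq_excess c (s * y)"
    by (simp add: sq_excess_def X_def Y_def)
qed simp

lemma card_far_mult_sq_le_potential:
  assumes "0 \<le> d"
  shows "real (card {v \<in> {..<n}. d < \<bar>real (l v) - a\<bar>}) * d\<^sup>2 \<le> potential n a l"
proof -
  let ?S = "{v \<in> {..<n}. d < \<bar>real (l v) - a\<bar>}"
  have "real (card ?S) * d\<^sup>2 = (\<Sum>i\<in>?S. d\<^sup>2)" by simp
  also have "\<dots> \<le> (\<Sum>i\<in>?S. (real (l i) - a)\<^sup>2)"
  proof (rule sum_mono)
    fix i assume "i \<in> ?S"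
    then show "d\<^sup>2 \<le> (real (l i) - a)\<^sup>2"
      using assms power_mono[of d "\<bar>real (l i) - a\<bar>" 2] by simp
  qed
  also have "\<dots> \<le> potential n a l"
    unfolding potential_def by (intro sum_mono2) auto
  finally show ?thesis .
qed

lemma card_near_ge_half:
  assumes "3 \<le> c" and "potential n a l < real n" and "L \<subseteq> {..<n}"
    and far: "\<And>v. v < n \<Longrightarrow> v \<notin> L \<Longrightarrow> c - 1 < \<bar>real (l v) - a\<bar>"
  shows "real n / 2 \<le> real (card L)"
proof -
  let ?B = "{v \<in> {..<n}. c - 1 < \<bar>real (l v) - a\<bar>}"
  have "4 \<le> (c - 1)\<^sup>2"
    using assms(1) power_mono[of 2 "c - 1" 2] by simp
  then have "real (card ?B) * 4 \<le> real (card ?B) * (c - 1)\<^sup>2"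
    by (simp add: mult_left_mono)
  also have "\<dots> \<le> potential n a l"
    using card_far_mult_sq_le_potential[of "c - 1" n l a] assms(1) by simp
  finally have "real (card ?B) * 4 \<le> potential n a l" .
  moreover have "card ({..<n} - L) \<le> card ?B"
    using far by (intro card_mono) auto
  moreover have "card ({..<n} - L) = n - card L" and "card L \<le> n"
    using assms(3) card_mono[OF _ assms(3)] by (simp_all add: card_Diff_subset finite_subset)
  ultimately show ?thesis
    using assms(2) by (simp add: of_nat_diff)
qed

text \<open>Each of the at least \<open>n/2\<close> light partners of a heavy node \<open>u\<close> removes half of \<open>u\<close>'s share of
  \<open>\<Sum> f\<close>, so the total gain over all \<open>n (n - 1)\<close> pairs is at least \<open>n/4 \<cdot> \<Sum> f\<close>.\<close>

lemma sum_balance_step_contraction: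
  fixes f :: "real \<Rightarrow> real"
  assumes n: "2 \<le> n" and f: "convex_on UNIV f" and f_nonneg: "\<And>x. 0 \<le> f x"
    and H: "H \<subseteq> {..<n}" and L: "L \<subseteq> {..<n}" "H \<inter> L = {}"
    and vanish: "\<And>u. u < n \<Longrightarrow> u \<notin> H \<Longrightarrow> f (real (l u) - a) = 0"
    and card_L: "real n / 2 \<le> real (card L)"
    and halve: "\<And>u v. u \<in> H \<Longrightarrow> v \<in> L \<Longrightarrow>
      f (real (l u) - a) / 2 \<le> balance_gain (\<lambda>x. f (real x - a)) (l u) (l v)"
  shows "(\<Sum>p\<in>node_pairs n. \<Sum>i<n. f (real (balance_step p l i) - a))
    \<le> real (card (node_pairs n)) * (1 - 1 / (4 * real n)) * (\<Sum>i<n. f (real (l i) - a))"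
proof -
  define F where "F = (\<lambda>x. f (real x - a))"
  define S where "S = (\<Sum>i<n. F (l i))"
  define D where "D p = balance_gain F (l (fst p)) (l (snd p))" for p
  have D_nonneg: "0 \<le> D p" for p
    unfolding D_def F_def by (rule balance_gain_convex_nonneg[OF f])
  have "S = (\<Sum>u\<in>H. F (l u))"
    unfolding S_def using H vanish by (intro sum.mono_neutral_right) (auto simp: F_def)
  moreover have "real n / 4 * F (l u) \<le> real (card L) * (F (l u) / 2)" for u
    using card_L mult_right_mono[of "real n / 2" "real (card L)" "F (l u) / 2"] f_nonneg
    by (simp add: F_def)
  ultimately have "real n / 4 * S \<le> (\<Sum>u\<in>H. real (card L) * (F (l u) / 2))"
    by (simp add: sum_distrib_left sum_mono)
  also have "\<dots> = (\<Sum>u\<in>H. \<Sum>v\<in>L. F (l u) / 2)"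
    by simp
  also have "\<dots> \<le> (\<Sum>u\<in>H. \<Sum>v\<in>L. D (u, v))"
    using halve by (intro sum_mono) (simp add: D_def F_def)
  also have "\<dots> = (\<Sum>p\<in>H \<times> L. D p)"
    by (simp add: sum.cartesian_product)
  also have "\<dots> \<le> (\<Sum>p\<in>node_pairs n. D p)"
    using H L D_nonneg by (intro sum_mono2[OF finite_node_pairs]) (auto simp: node_pairs_def)
  finally have gain: "real n / 4 * S \<le> (\<Sum>p\<in>node_pairs n. D p)" .
  have "(\<Sum>p\<in>node_pairs n. \<Sum>i<n. F (balance_step p l i)) = (\<Sum>p\<in>node_pairs n. S - D p)"
    by (intro sum.cong) (auto simp: S_def D_def sum_balance_step)
  also have "\<dots> \<le> real (card (node_pairs n)) * S - real n / 4 * S"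
    using gain by (simp add: sum_subtractf)
  also have "\<dots> \<le> real (card (node_pairs n)) * (1 - 1 / (4 * real n)) * S"
  proof -
    have "0 \<le> S" unfolding S_def F_def by (simp add: f_nonneg sum_nonneg)
    then show ?thesis
      using n by (simp add: card_node_pairs of_nat_diff field_simps mult_right_mono)
  qed
  finally show ?thesis unfolding S_def F_def .
qed

lemma sum_sq_excess_balance_step_le:
  assumes n: "2 \<le> n" and c: "3 \<le> c" and s: "\<bar>s\<bar> = 1" and low: "potential n a l < real n"
  shows "(\<Sum>p\<in>node_pairs n. \<Sum>i<n. sq_excess c (s * (real (balance_step p l i) - a)))
    \<le> real (card (node_pairs n)) * (1 - 1 / (4 * real n)) * (\<Sum>i<n. sq_excess c (s * (real (l i) - a)))"
proof (rule sum_balance_step_contraction[OF n convex_sq_excess_scaled sq_excess_nonneg,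
      where H = "{u \<in> {..<n}. c < s * (real (l u) - a)}" and L = "{v \<in> {..<n}. s * (real (l v) - a) \<le> c - 1}"])
  have s_le_abs: "s * x \<le> \<bar>x\<bar>" for x
    using abs_ge_self[of "s * x"] s by (simp add: abs_mult)
  show "real n / 2 \<le> real (card {v \<in> {..<n}. s * (real (l v) - a) \<le> c - 1})"
  proof (rule card_near_ge_half[OF c low])
    show "c - 1 < \<bar>real (l v) - a\<bar>"
      if "v < n" "v \<notin> {v \<in> {..<n}. s * (real (l v) - a) \<le> c - 1}" for v
      using that s_le_abs[of "real (l v) - a"] by simp
  qed auto
  show "sq_excess c (s * (real (l u) - a)) / 2
      \<le> balance_gain (\<lambda>x. sq_excess c (s * (real x - a))) (l u) (l v)"
    if u: "u \<in> {u \<in> {..<n}. c < s * (real (l u) - a)}"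
      and v: "v \<in> {v \<in> {..<n}. s * (real (l v) - a) \<le> c - 1}" for u v
  proof -
    let ?f = "\<lambda>x. sq_excess c (s * (real x - a))"
    let ?m = "real (l u + l v) / 2"
    have quarter: "?f y \<le> ?f (l u) / 4" if "\<bar>real y - ?m\<bar> \<le> 1 / 2" for y
    proof (rule sq_excess_le_quarter)
      show "c < s * (real (l u) - a)" using u by simp
      have "s * (real y - a) = s * (real y - ?m) + (s * (real (l u) - a) + s * (real (l v) - a)) / 2"
        by (simp add: field_simps)
      moreover have "s * (real (l v) - a) \<le> c - 1" using v by simp
      ultimately show "s * (real y - a) - c \<le> (s * (real (l u) - a) - c) / 2"
        using s_le_abs[of "real y - ?m"] that by argo
    qed
    from quarter[OF real_halves(4)] quarter[OF real_halves(5)] show ?thesis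
      using sq_excess_nonneg[of c "s * (real (l v) - a)"] by (simp add: balance_gain_def)
  qed
qed (auto simp: sq_excess_def)

lemma balanced_within_iff: "balanced_within n a d l \<longleftrightarrow> (\<forall>i<n. \<bar>real (l i) - a\<bar> \<le> d)"
  by (auto simp: balanced_within_def abs_le_iff)

definition excess_potential :: "real \<Rightarrow> nat \<Rightarrow> real \<Rightarrow> (nat \<Rightarrow> nat) \<Rightarrow> real" where
  "excess_potential c n a l = (\<Sum>i<n. sq_excess c (real (l i) - a) + sq_excess c (- (real (l i) - a)))"

lemma excess_potential_nonneg: "0 \<le> excess_potential c n a l"
  by (simp add: excess_potential_def sq_excess_nonneg sum_nonneg add_nonneg_nonneg)

lemma excess_potential_le_potential: "0 \<le> c \<Longrightarrow> excess_potential c n a l \<le> potential n a l"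
  unfolding excess_potential_def potential_def by (intro sum_mono sq_excess_add_neg_le_square)

lemma one_le_excess_potential:
  assumes "1 \<le> c" and "\<not> balanced_within n a (2 * c) l"
  shows "1 \<le> excess_potential c n a l"
proof -
  obtain i where i: "i < n" and far: "2 * c < \<bar>real (l i) - a\<bar>"
    using assms(2) by (auto simp: balanced_within_iff not_le)
  have "1 \<le> c\<^sup>2"
    using assms(1) by (simp add: one_le_power)
  also have "\<dots> \<le> (\<bar>real (l i) - a\<bar> - c)\<^sup>2"
    using assms(1) far by (intro power_mono) auto
  also have "\<dots> = sq_excess c (real (l i) - a) + sq_excess c (- (real (l i) - a))"
    using assms(1) far by (intro sq_excess_add_neg_eq[symmetric]) auto
  also have "\<dots> \<le> excess_potential c n a l"
    unfolding excess_potential_def using i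
    by (intro member_le_sum) (auto intro: add_nonneg_nonneg sq_excess_nonneg)
  finally show ?thesis .
qed

lemma sum_excess_potential_balance_step_le:
  assumes "2 \<le> n" and "3 \<le> c" and "potential n a l < real n"
  shows "(\<Sum>p\<in>node_pairs n. excess_potential c n a (balance_step p l))
    \<le> real (card (node_pairs n)) * (1 - 1 / (4 * real n)) * excess_potential c n a l"
  using sum_sq_excess_balance_step_le[OF assms(1,2) _ assms(3), of 1]
    sum_sq_excess_balance_step_le[OF assms(1,2) _ assms(3), of "-1"]
  by (simp add: excess_potential_def sum.distrib distrib_left)

lemma n_ln_n_ge_half:
  assumes "2 \<le> n"
  shows "1 / 2 \<le> real n * ln (real n)"
proof -
  have "1 / 2 - (1 / 2)\<^sup>2 \<le> ln (1 + 1 / 2 :: real)"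
    by (rule ln_one_plus_pos_lower_bound) auto
  also have "\<dots> \<le> ln (real n)"
    using assms by simp
  finally have "1 / 4 \<le> ln (real n)" by (simp add: power2_eq_square)
  then show ?thesis
    using assms mult_mono[of 2 "real n" "1 / 4" "ln (real n)"] by simp
qed

lemma contraction_power_le:
  assumes "2 \<le> n" and t: "8 * real n * ln (real n) \<le> real t"
  shows "(1 - 1 / (4 * real n)) ^ t \<le> 1 / (real n)\<^sup>2"
proof -
  have n: "0 < real n" using assms(1) by simp
  have "(1 - 1 / (4 * real n)) ^ t \<le> exp (- (1 / (4 * real n))) ^ t"
    using exp_ge_add_one_self[of "- (1 / (4 * real n))"] assms(1)
    by (intro power_mono) (simp_all add: field_simps)
  also have "\<dots> = exp (- (real t / (4 * real n)))"
    by (simp flip: exp_of_nat_mult)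
  also have "\<dots> \<le> exp (- (2 * ln (real n)))"
    using divide_right_mono[OF t, of "4 * real n"] n by simp
  also have "\<dots> = 1 / (real n)\<^sup>2"
  proof -
    have "exp (2 * ln (real n)) = (real n)\<^sup>2"
      using n by (simp only: mult_2 exp_add exp_ln power2_eq_square)
    then show ?thesis by (simp add: exp_minus field_simps)
  qed
  finally show ?thesis .
qed

lemma emeasure_unbalanced_le:
  assumes n: "2 \<le> n" and c: "3 \<le> c" and t: "8 * real n * ln (real n) \<le> real t"
    and low: "potential n a l < real n"
  shows "emeasure (pair_stream_space n) {\<omega>. \<not> balanced_within n a (2 * c) (load l \<omega> t)}
    \<le> ennreal (1 / real n)"
proof -
  define \<rho> where "\<rho> = 1 - 1 / (4 * real n)"
  have closed: "balance_step p l' \<in> {l'. potential n a l' < real n}"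
    if "l' \<in> {l'. potential n a l' < real n}" "p \<in> node_pairs n" for l' p
    using that potential_balance_step_le[OF that(2), of a l'] by simp
  have "emeasure (pair_stream_space n) {\<omega>. \<not> balanced_within n a (2 * c) (load l \<omega> t)}
      \<le> ennreal (\<rho> ^ t * excess_potential c n a l)"
    using n c low sum_excess_potential_balance_step_le one_le_excess_potential
    by (intro emeasure_load_violates_le[OF n closed, where F="excess_potential c n a"])
      (simp_all add: \<rho>_def excess_potential_nonneg field_simps)
  also have "\<dots> \<le> ennreal (1 / (real n)\<^sup>2 * real n)"
  proof (intro ennreal_leI mult_mono)
    show "\<rho> ^ t \<le> 1 / (real n)\<^sup>2"
      unfolding \<rho>_def by (rule contraction_power_le[OF n t])
    show "excess_potential c n a l \<le> real n"
      using excess_potential_le_potential[of c n a l] c low by simp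
  qed (simp_all add: excess_potential_nonneg)
  also have "\<dots> = ennreal (1 / real n)"
    by (simp add: power2_eq_square)
  finally show ?thesis .
qed

section \<open>The stopping times\<close>

lemma measurable_T1: "T1 n l0 \<in> pair_stream_space n \<rightarrow>\<^sub>M count_space UNIV"
  unfolding T1_def by (rule measurable_Least) simp

lemma measurable_T1_pred: "Measurable.pred (pair_stream_space n) (\<lambda>\<omega>. R (T1 n l0 \<omega>))"
  by (rule measurable_compose[OF measurable_T1]) simp

lemma measurable_T2: "T2 c n l0 \<in> pair_stream_space n \<rightarrow>\<^sub>M count_space UNIV"
  unfolding T2_def by (rule measurable_Least) (intro pred_intros_logic measurable_T1_pred measurable_load_pred)

lemma measurable_T2_T1_pred:
  "Measurable.pred (pair_stream_space n) (\<lambda>\<omega>. R (T2 c n l0 \<omega>) (T1 n l0 \<omega>))"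
  by (rule measurable_compose_countable'[where f="\<lambda>i \<omega>. R i (T1 n l0 \<omega>)" and I=UNIV, OF _ measurable_T2])
    (simp_all add: measurable_T1_pred)

lemma sets_T2_T1_event:
  "{\<omega> \<in> space (pair_stream_space n).
      (\<exists>t. potential n (avg_load n l0) (load l0 \<omega> t) < real n) \<and>
      (\<exists>t \<ge> T1 n l0 \<omega>. balanced_within n (avg_load n l0) (2 * c) (load l0 \<omega> t)) \<and>
      R (T2 c n l0 \<omega>) (T1 n l0 \<omega>)} \<in> sets (pair_stream_space n)"
  by (intro predE pred_intros_logic pred_intros_countable measurable_load_pred measurable_T1_pred
      measurable_T2_T1_pred)

lemma T2_le_T1_add:
  fixes n :: nat and l0 :: "nat \<Rightarrow> nat"
  defines "Q \<equiv> \<lambda>l. potential n (avg_load n l0) l < real n"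
  assumes "Q (load l0 \<omega> t)"
    and balanced: "\<And>s. hits_first Q l0 \<omega> s \<Longrightarrow> balanced_within n (avg_load n l0) (2 * c) (load l0 \<omega> (s + k))"
  shows "\<exists>t \<ge> T1 n l0 \<omega>. balanced_within n (avg_load n l0) (2 * c) (load l0 \<omega> t)"
    and "T2 c n l0 \<omega> \<le> T1 n l0 \<omega> + k"
proof -
  have "hits_first Q l0 \<omega> (T1 n l0 \<omega>)"
    unfolding hits_first_def T1_def Q_def
    using LeastI[of "\<lambda>t. Q (load l0 \<omega> t)", OF assms(2)] not_less_Least by (auto simp: Q_def)
  then have bal: "balanced_within n (avg_load n l0) (2 * c) (load l0 \<omega> (T1 n l0 \<omega> + k))"
    by (rule balanced)
  then show "\<exists>t \<ge> T1 n l0 \<omega>. balanced_within n (avg_load n l0) (2 * c) (load l0 \<omega> t)"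
    by (intro exI[of _ "T1 n l0 \<omega> + k"]) simp
  show "T2 c n l0 \<omega> \<le> T1 n l0 \<omega> + k"
    unfolding T2_def using bal by (intro Least_le) simp
qed

lemma measure_T2_le_T1_add_ge:
  assumes n: "2 \<le> n" and c: "3 \<le> c" and k: "8 * real n * ln (real n) \<le> real k"
  shows "1 - 2 / real n \<le> measure (pair_stream_space n) {\<omega> \<in> space (pair_stream_space n).
      (\<exists>t. potential n (avg_load n l0) (load l0 \<omega> t) < real n) \<and>
      (\<exists>t \<ge> T1 n l0 \<omega>. balanced_within n (avg_load n l0) (2 * c) (load l0 \<omega> t)) \<and>
      T2 c n l0 \<omega> \<le> T1 n l0 \<omega> + k}"
    (is "_ \<le> measure _ ?G")
proof -
  let ?S = "pair_stream_space n"
  interpret prob_space ?S by (rule prob_space_pair_stream_space)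
  define Q where "Q = (\<lambda>l. potential n (avg_load n l0) l < real n)"
  define bal where "bal = balanced_within n (avg_load n l0) (2 * c)"
  obtain t where "emeasure ?S {\<omega>. \<not> Q (load l0 \<omega> t)} \<le> ennreal (1 / real n)"
    using emeasure_potential_not_below_le[OF n] unfolding Q_def by blast
  then have not_low: "measure ?S {\<omega>. \<not> Q (load l0 \<omega> t)} \<le> 1 / real n"
    by (simp add: emeasure_eq_measure ennreal_le_iff)
  have "emeasure ?S {\<omega>. \<exists>s. hits_first Q l0 \<omega> s \<and> \<not> bal (load l0 \<omega> (s + k))} \<le> ennreal (1 / real n)"
    using emeasure_unbalanced_le[OF n c k]
    by (intro emeasure_after_first_hit_le[OF n]) (simp add: Q_def bal_def)
  then have late: "measure ?S {\<omega>. \<exists>s. hits_first Q l0 \<omega> s \<and> \<not> bal (load l0 \<omega> (s + k))} \<le> 1 / real n"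
    by (simp add: emeasure_eq_measure ennreal_le_iff)
  define E where "E = {\<omega>. \<not> Q (load l0 \<omega> t)} \<union> {\<omega>. \<exists>s. hits_first Q l0 \<omega> s \<and> \<not> bal (load l0 \<omega> (s + k))}"
  have E: "E \<in> sets ?S"
    unfolding E_def by (intro sets.Un sets_pair_stream_space_Collect, measurable)+
  have "measure ?S E \<le> 1 / real n + 1 / real n"
    unfolding E_def
    by (rule order_trans[OF measure_Un_le add_mono[OF not_low late]])
      (intro sets_pair_stream_space_Collect, measurable)+
  moreover have "space ?S - E \<subseteq> ?G"
  proof
    fix \<omega> assume "\<omega> \<in> space ?S - E"
    then have "Q (load l0 \<omega> t)" and "\<And>s. hits_first Q l0 \<omega> s \<Longrightarrow> bal (load l0 \<omega> (s + k))"
      by (auto simp: E_def)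
    then show "\<omega> \<in> ?G"
      using T2_le_T1_add[of n l0 \<omega> t c k] by (auto simp: Q_def bal_def)
  qed
  moreover have "?G \<in> sets ?S"
    by (rule sets_T2_T1_event)
  ultimately show ?thesis
    using finite_measure_mono[of "space ?S - E" ?G] prob_compl[OF E] by simp
qed

theorem lemma4:
  fixes c :: real
  assumes "c \<ge> 10"
  shows "\<exists>C > 0. \<forall>n \<ge> 2. \<forall>l0 :: nat \<Rightarrow> nat.
    measure (pair_stream_space n)
      {\<omega> \<in> space (pair_stream_space n).
         (\<exists>t. potential n (avg_load n l0) (load l0 \<omega> t) < real n) \<and>
         (\<exists>t \<ge> T1 n l0 \<omega>. balanced_within n (avg_load n l0) (2 * c) (load l0 \<omega> t)) \<and>
         real (T2 c n l0 \<omega>) \<le> real (T1 n l0 \<omega>) + C * real n * ln (real n)}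
    \<ge> 1 - C / real n"
proof (intro exI[of _ 10] conjI allI impI)
  fix n :: nat and l0 :: "nat \<Rightarrow> nat"
  assume n: "2 \<le> n"
  define k where "k = nat \<lceil>8 * real n * ln (real n)\<rceil>"
  have k: "8 * real n * ln (real n) \<le> real k" "real k \<le> 10 * real n * ln (real n)"
    using n_ln_n_ge_half[OF n] unfolding k_def by linarith+
  have "1 - 10 / real n \<le> 1 - 2 / real n"
    using n by (simp add: field_simps)
  also have "\<dots> \<le> measure (pair_stream_space n) {\<omega> \<in> space (pair_stream_space n).
      (\<exists>t. potential n (avg_load n l0) (load l0 \<omega> t) < real n) \<and>
      (\<exists>t \<ge> T1 n l0 \<omega>. balanced_within n (avg_load n l0) (2 * c) (load l0 \<omega> t)) \<and>
      T2 c n l0 \<omega> \<le> T1 n l0 \<omega> + k}"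
    using assms by (intro measure_T2_le_T1_add_ge[OF n _ k(1)]) simp
  also have "\<dots> \<le> measure (pair_stream_space n) {\<omega> \<in> space (pair_stream_space n).
      (\<exists>t. potential n (avg_load n l0) (load l0 \<omega> t) < real n) \<and>
      (\<exists>t \<ge> T1 n l0 \<omega>. balanced_within n (avg_load n l0) (2 * c) (load l0 \<omega> t)) \<and>
      real (T2 c n l0 \<omega>) \<le> real (T1 n l0 \<omega>) + 10 * real n * ln (real n)}"
    using k(2) prob_space.finite_measure[OF prob_space_pair_stream_space]
    by (intro finite_measure.finite_measure_mono sets_T2_T1_event[where R="\<lambda>x y. real x \<le> real y + _"])
      (auto simp del: of_nat_add simp: of_nat_add[symmetric])
  finally show "measure (pair_stream_space n) {\<omega> \<in> space (pair_stream_space n).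
      (\<exists>t. potential n (avg_load n l0) (load l0 \<omega> t) < real n) \<and>
      (\<exists>t \<ge> T1 n l0 \<omega>. balanced_within n (avg_load n l0) (2 * c) (load l0 \<omega> t)) \<and>
      real (T2 c n l0 \<omega>) \<le> real (T1 n l0 \<omega>) + 10 * real n * ln (real n)} \<ge> 1 - 10 / real n" .
qed simp

end
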